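(* Let $\mathcal L$ be a linearly ordered non-discrete MV-algebra. On the set of filters (in the sense below), define $\mathcal F\equiv\mathcal G$ iff $\mathcal F\sqsubseteq\!\!\to\mathcal G=\mathcal G\sqsubseteq\!\!\to\mathcal F=\{1\}$. Then $\equiv$ is an equivalence relation. Moreover, it is a congruence for ${}^+$ and $\sqsubseteq\!\!\to$: if $\mathcal F_1\equiv\mathcal F_2$ and $\mathcal G_1\equiv\mathcal G_2$, then $\mathcal F_1^+\equiv\mathcal F_2^+$ and $\mathcal F_1\sqsubseteq\!\!\to\mathcal G_1\equiv\mathcal F_2\sqsubseteq\!\!\to\mathcal G_2$.
   Context: $\mathcal L=(L,\oplus,\lnot,0)$ is a linearly ordered MV-algebra. We write $1=\lnot0$, $x\otimes y=\lnot(\lnot x\oplus\lnot y)$, and $x\to y=\lnot x\oplus y$. Non-discrete means no element has an immediate successor or an immediate predecessor. A "filter" means a nonempty proper upward-closed subset $\mathcal F$ of $L$ with kernel $\mathcal K(\mathcal F)=\{z:\forall a\notin\mathcal F,\ z\to a\notin\mathcal F\}=\{1\}$. For upward-closed $\mathcal F$ and $a\in L$, let $\mathcal F_a=\{z:z\to a\notin\mathcal F\}$ and $\mathcal F^+=\mathcal F_0=\{z:\lnot z\notin\mathcal F\}$. For $\mathcal F\subseteq\mathcal G$ we put $\mathcal F\sqsubseteq\!\!\to\mathcal G=\bigcap_{a\in L\setminus\mathcal G}\mathcal F_a$, and in general $\mathcal F\sqsubseteq\!\!\to\mathcal G:=(\mathcal F\cap\mathcal G)\sqsubseteq\!\!\to\mathcal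 G$. *)

theory Defs
  imports Main
begin

definition mv_one :: "('a \<Rightarrow> 'a) \<Rightarrow> 'a \<Rightarrow> 'a" where
  "mv_one neg zero = neg zero"

definition mv_imp :: "('a \<Rightarrow> 'a \<Rightarrow> 'a) \<Rightarrow> ('a \<Rightarrow> 'a) \<Rightarrow> 'a \<Rightarrow> 'a \<Rightarrow> 'a" where
  "mv_imp oplus neg x y = oplus (neg x) y"

definition mv_algebra :: "('a \<Rightarrow> 'a \<Rightarrow> 'a) \<Rightarrow> ('a \<Rightarrow> 'a) \<Rightarrow> 'a \<Rightarrow> bool" where
  "mv_algebra oplus neg zero \<longleftrightarrow>
     (\<forall>x y z. oplus x (oplus y z) = oplus (oplus x y) z) \<and>
     (\<forall>x y. oplus x y = oplus y x) \<and>
     (\<forall>x. oplus x zero = x) \<and>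
     (\<forall>x. neg (neg x) = x) \<and>
     (\<forall>x. oplus x (neg zero) = neg zero) \<and>
     (\<forall>x y. oplus (neg (oplus (neg x) y)) y = oplus (neg (oplus (neg y) x)) x)"

definition mv_le :: "('a \<Rightarrow> 'a \<Rightarrow> 'a) \<Rightarrow> ('a \<Rightarrow> 'a) \<Rightarrow> 'a \<Rightarrow> 'a \<Rightarrow> 'a \<Rightarrow> bool" where
  "mv_le oplus neg zero x y \<longleftrightarrow> mv_imp oplus neg x y = mv_one neg zero"

definition mv_less :: "('a \<Rightarrow> 'a \<Rightarrow> 'a) \<Rightarrow> ('a \<Rightarrow> 'a) \<Rightarrow> 'a \<Rightarrow> 'a \<Rightarrow> 'a \<Rightarrow> bool" where
  "mv_less oplus neg zero x y \<longleftrightarrow> mv_le oplus neg zero x y \<and> x \<noteq> y"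

definition linear_mv :: "('a \<Rightarrow> 'a \<Rightarrow> 'a) \<Rightarrow> ('a \<Rightarrow> 'a) \<Rightarrow> 'a \<Rightarrow> bool" where
  "linear_mv oplus neg zero \<longleftrightarrow> mv_algebra oplus neg zero \<and>
     (\<forall>x y. mv_le oplus neg zero x y \<or> mv_le oplus neg zero y x)"

definition non_discrete :: "('a \<Rightarrow> 'a \<Rightarrow> 'a) \<Rightarrow> ('a \<Rightarrow> 'a) \<Rightarrow> 'a \<Rightarrow> bool" where
  "non_discrete oplus neg zero \<longleftrightarrow>
     (\<forall>x. \<not> (\<exists>y. mv_less oplus neg zero x y \<and>
                 \<not> (\<exists>z. mv_less oplus neg zero x z \<and> mv_less oplus neg zero z y))) \<and>
     (\<forall>x. \<not> (\<exists>y. mv_less oplus neg zero y x \<and>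
                 \<not> (\<exists>z. mv_less oplus neg zero y z \<and> mv_less oplus neg zero z x)))"

definition up_closed :: "('a \<Rightarrow> 'a \<Rightarrow> 'a) \<Rightarrow> ('a \<Rightarrow> 'a) \<Rightarrow> 'a \<Rightarrow> 'a set \<Rightarrow> bool" where
  "up_closed oplus neg zero F \<longleftrightarrow> (\<forall>x y. x \<in> F \<longrightarrow> mv_le oplus neg zero x y \<longrightarrow> y \<in> F)"

definition kernel :: "('a \<Rightarrow> 'a \<Rightarrow> 'a) \<Rightarrow> ('a \<Rightarrow> 'a) \<Rightarrow> 'a set \<Rightarrow> 'a set" where
  "kernel oplus neg F = {z. \<forall>a. a \<notin> F \<longrightarrow> mv_imp oplus neg z a \<notin> F}"

definition mv_filter :: "('a \<Rightarrow> 'a \<Rightarrow> 'a) \<Rightarrow> ('a \<Rightarrow> 'a) \<Rightarrow> 'a \<Rightarrow> 'a set \<Rightarrow> bool" where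
  "mv_filter oplus neg zero F \<longleftrightarrow> F \<noteq> {} \<and> F \<noteq> UNIV \<and> up_closed oplus neg zero F \<and>
     kernel oplus neg F = {mv_one neg zero}"

definition sub_at :: "('a \<Rightarrow> 'a \<Rightarrow> 'a) \<Rightarrow> ('a \<Rightarrow> 'a) \<Rightarrow> 'a set \<Rightarrow> 'a \<Rightarrow> 'a set" where
  "sub_at oplus neg F a = {z. mv_imp oplus neg z a \<notin> F}"

definition fplus :: "('a \<Rightarrow> 'a \<Rightarrow> 'a) \<Rightarrow> ('a \<Rightarrow> 'a) \<Rightarrow> 'a \<Rightarrow> 'a set \<Rightarrow> 'a set" where
  "fplus oplus neg zero F = sub_at oplus neg F zero"

text \<open>F \<sqsubseteq>\<rightarrow> G = \<Inter>_{a \<notin> G} (F \<inter> G)_a (general form; agrees with the F \<subseteq> G case).\<close>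
definition farr :: "('a \<Rightarrow> 'a \<Rightarrow> 'a) \<Rightarrow> ('a \<Rightarrow> 'a) \<Rightarrow> 'a set \<Rightarrow> 'a set \<Rightarrow> 'a set" where
  "farr oplus neg F G = (\<Inter>a \<in> - G. sub_at oplus neg (F \<inter> G) a)"

definition fequiv :: "('a \<Rightarrow> 'a \<Rightarrow> 'a) \<Rightarrow> ('a \<Rightarrow> 'a) \<Rightarrow> 'a \<Rightarrow> 'a set \<Rightarrow> 'a set \<Rightarrow> bool" where
  "fequiv oplus neg zero F G \<longleftrightarrow>
     farr oplus neg F G = {mv_one neg zero} \<and> farr oplus neg G F = {mv_one neg zero}"

end

theory Submission imports Defs begin

(* The central notion is the residual  res X Y = {z. \<forall>x\<in>X. z \<odot> x \<in> Y}  of two sets.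
   For up-closed sets the paper's operations are residuals: the kernel of F is  res F F,
   and F \<sqsubseteq>\<rightarrow> G is  res (F \<inter> G) G.  Call X and Y "near" when  res X Y \<subseteq> {1}.
   Because up-closed sets of a chain are themselves linearly ordered by inclusion,
   F \<equiv> G holds exactly when the smaller of the two sets is near the larger one.

   The only place where non-discreteness enters is nearness being transitive: every z < 1
   lies below some u \<odot> u with u < 1, and splitting z into two such factors u separates
   the two nearness hypotheses.  For the congruences it suffices
   (by symmetry and linearity) to treat F1 \<subseteq> F2 near each other; for  (-)\<^sup>+  this is a direct
   computation, for \<sqsubseteq>\<rightarrow> it reduces, via the exchange law  res A (res B C) = res B (res A C),
   to transitivity of nearness together with the fact that the residual of two nested
   filters again has trivial kernel. *)

locale mv_chain =
  fixes oplus :: "'a \<Rightarrow> 'a \<Rightarrow> 'a" (infixl "\<oplus>" 65) and neg :: "'a \<Rightarrow> 'a" and zero :: 'a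
  assumes linear_mv: "linear_mv oplus neg zero"
begin

abbreviation one :: 'a where "one \<equiv> neg zero"
abbreviation le :: "'a \<Rightarrow> 'a \<Rightarrow> bool" (infix "\<preceq>" 50) where "x \<preceq> y \<equiv> mv_le oplus neg zero x y"
abbreviation imp :: "'a \<Rightarrow> 'a \<Rightarrow> 'a" where "imp x y \<equiv> mv_imp oplus neg x y"
abbreviation up :: "'a set \<Rightarrow> bool" where "up X \<equiv> up_closed oplus neg zero X"

abbreviation is_filter :: "'a set \<Rightarrow> bool" where "is_filter F \<equiv> mv_filter oplus neg zero F"
abbreviation fpos :: "'a set \<Rightarrow> 'a set" where "fpos F \<equiv> fplus oplus neg zero F"
abbreviation arr :: "'a set \<Rightarrow> 'a set \<Rightarrow> 'a set" where "arr F G \<equiv> farr oplus neg F G"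
abbreviation feq :: "'a set \<Rightarrow> 'a set \<Rightarrow> bool" where "feq F G \<equiv> fequiv oplus neg zero F G"

definition times :: "'a \<Rightarrow> 'a \<Rightarrow> 'a" (infixl "\<odot>" 70) where
  "x \<odot> y = neg (neg x \<oplus> neg y)"

lemma axioms:
  "\<And>x y z. x \<oplus> (y \<oplus> z) = (x \<oplus> y) \<oplus> z"
  "\<And>x y. x \<oplus> y = y \<oplus> x"
  "\<And>x. x \<oplus> zero = x"
  "\<And>x. neg (neg x) = x"
  "\<And>x. x \<oplus> one = one"
  "\<And>x y. neg (neg x \<oplus> y) \<oplus> y = neg (neg y \<oplus> x) \<oplus> x"
  using linear_mv unfolding linear_mv_def mv_algebra_def by (elim conjE, blast)+

lemma linear: "x \<preceq> y \<or> y \<preceq> x"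
  using linear_mv unfolding linear_mv_def by blast

lemma le_iff: "x \<preceq> y \<longleftrightarrow> neg x \<oplus> y = one"
  unfolding mv_le_def mv_imp_def mv_one_def by simp

lemma imp_eq: "imp x y = neg x \<oplus> y"
  unfolding mv_imp_def by simp

lemma plus_assoc: "x \<oplus> y \<oplus> z = x \<oplus> (y \<oplus> z)" using axioms(1) by simp
lemma plus_comm: "x \<oplus> y = y \<oplus> x" by (rule axioms(2))
lemma plus_lcomm: "x \<oplus> (y \<oplus> z) = y \<oplus> (x \<oplus> z)"
  by (simp only: plus_assoc[symmetric] plus_comm[of x y])
lemmas plus_ac = plus_assoc plus_comm plus_lcomm

lemma plus_zero [simp]: "x \<oplus> zero = x" "zero \<oplus> x = x"
  using axioms(3)[of x] plus_comm[of zero x] by simp_all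
lemma neg_neg [simp]: "neg (neg x) = x" by (rule axioms(4))
lemma plus_one [simp]: "x \<oplus> one = one" "one \<oplus> x = one"
  using axioms(5)[of x] plus_comm[of one x] by simp_all
lemma plus_neg_self [simp]: "x \<oplus> neg x = one" "neg x \<oplus> x = one"
proof -
  have "neg (neg x \<oplus> one) \<oplus> one = neg (neg one \<oplus> x) \<oplus> x" by (rule axioms(6))
  then show "x \<oplus> neg x = one" using plus_comm by simp
  then show "neg x \<oplus> x = one" using plus_comm[of x "neg x"] by simp
qed

lemma le_refl [simp]: "x \<preceq> x" by (simp add: le_iff)

lemma le_antisym: "x \<preceq> y \<Longrightarrow> y \<preceq> x \<Longrightarrow> x = y"
  using axioms(6)[of x y] by (simp add: le_iff)

lemma le_iff_summand: "x \<preceq> y \<longleftrightarrow> (\<exists>t. y = x \<oplus> t)"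
proof
  assume "x \<preceq> y"
  then have "y = x \<oplus> neg (neg y \<oplus> x)"
    using axioms(6)[of y x] by (simp add: le_iff plus_comm)
  then show "\<exists>t. y = x \<oplus> t" ..
next
  assume "\<exists>t. y = x \<oplus> t"
  then show "x \<preceq> y" unfolding le_iff by (auto simp only: axioms(1) plus_neg_self plus_one)
qed

lemma le_trans [trans]: "x \<preceq> y \<Longrightarrow> y \<preceq> z \<Longrightarrow> x \<preceq> z"
  unfolding le_iff_summand by (auto simp: plus_assoc)

lemma plus_mono: "x \<preceq> y \<Longrightarrow> x \<oplus> c \<preceq> y \<oplus> c"
  unfolding le_iff_summand by (auto simp: plus_ac)

lemma neg_anti: "x \<preceq> y \<Longrightarrow> neg y \<preceq> neg x"
  unfolding le_iff by (simp add: plus_comm)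

lemma le_one [simp]: "x \<preceq> one" by (simp add: le_iff)

lemma one_le_iff: "one \<preceq> x \<longleftrightarrow> x = one"
  using le_antisym by auto

lemma times_comm: "x \<odot> y = y \<odot> x" unfolding times_def by (simp add: plus_comm)
lemma times_assoc: "x \<odot> y \<odot> z = x \<odot> (y \<odot> z)" unfolding times_def by (simp add: plus_assoc)
lemma times_lcomm: "x \<odot> (y \<odot> z) = y \<odot> (x \<odot> z)"
  by (simp only: times_assoc[symmetric] times_comm[of x y])
lemmas times_ac = times_assoc times_comm times_lcomm

lemma times_one [simp]: "x \<odot> one = x" "one \<odot> x = x" unfolding times_def by simp_all

lemma times_mono: "x \<preceq> y \<Longrightarrow> x \<odot> c \<preceq> y \<odot> c"
  unfolding times_def by (intro neg_anti plus_mono)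
lemma times_mono2: "x \<preceq> y \<Longrightarrow> c \<odot> x \<preceq> c \<odot> y"
  using times_mono[of x y c] by (simp add: times_comm)

lemma residuation: "x \<odot> y \<preceq> z \<longleftrightarrow> x \<preceq> imp y z"
  unfolding times_def le_iff imp_eq by (simp add: plus_assoc)

lemma imp_eq_one_iff: "imp x y = one \<longleftrightarrow> x \<preceq> y" by (simp add: le_iff imp_eq)

lemma times_imp_le: "x \<odot> imp x y \<preceq> y"
  using residuation[of "imp x y" x y] by (simp add: times_comm)

lemma le_times_imp: "x \<preceq> imp z (z \<odot> x)"
  using residuation[of x z "z \<odot> x"] by (simp add: times_comm)

lemma le_times_imp_of_le: "y \<preceq> x \<Longrightarrow> y \<preceq> x \<odot> imp x y"
proof -
  assume yx: "y \<preceq> x"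
  have "neg (neg (neg y) \<oplus> neg x) \<oplus> neg x = neg (neg (neg x) \<oplus> neg y) \<oplus> neg y"
    by (rule axioms(6))
  moreover have "neg (neg x) \<oplus> neg y = one" using yx by (simp add: le_iff plus_comm)
  ultimately have "neg x \<oplus> neg (neg x \<oplus> y) = neg y" by (simp add: plus_comm)
  then show ?thesis unfolding times_def imp_eq by simp
qed

lemma neg_times: "neg (z \<odot> x) = imp z (neg x)" unfolding times_def imp_eq by simp

lemma up_mem: "up X \<Longrightarrow> x \<in> X \<Longrightarrow> x \<preceq> y \<Longrightarrow> y \<in> X"
  unfolding up_closed_def by blast

lemma up_outside_below: "up X \<Longrightarrow> x \<in> X \<Longrightarrow> y \<notin> X \<Longrightarrow> y \<preceq> x"
  using up_mem linear by blast

lemma up_chain: "up X \<Longrightarrow> up Y \<Longrightarrow> X \<subseteq> Y \<or> Y \<subseteq> X"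
  using up_outside_below up_mem by blast

lemma up_inter: "up X \<Longrightarrow> up Y \<Longrightarrow> up (X \<inter> Y)"
  unfolding up_closed_def by blast

lemma up_union: "up X \<Longrightarrow> up Y \<Longrightarrow> up (X \<union> Y)"
  unfolding up_closed_def by blast

lemma up_one: "up {one}"
  unfolding up_closed_def using one_le_iff by blast

definition res :: "'a set \<Rightarrow> 'a set \<Rightarrow> 'a set" where
  "res X Y = {z. \<forall>x\<in>X. z \<odot> x \<in> Y}"

definition setmul :: "'a set \<Rightarrow> 'a set \<Rightarrow> 'a set" where
  "setmul X Y = {x \<odot> y | x y. x \<in> X \<and> y \<in> Y}"

lemma res_up: "up Y \<Longrightarrow> up (res X Y)"
  unfolding up_closed_def res_def using times_mono up_mem by blast

lemma one_in_res: "X \<subseteq> Y \<Longrightarrow> one \<in> res X Y"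
  unfolding res_def by auto

lemma res_anti: "X' \<subseteq> X \<Longrightarrow> res X Y \<subseteq> res X' Y"
  unfolding res_def by auto

lemma res_mono: "Y \<subseteq> Y' \<Longrightarrow> res X Y \<subseteq> res X Y'"
  unfolding res_def by auto

lemma res_one: "res {one} Y = Y"
  unfolding res_def by simp

lemma res_setmul: "res (setmul A B) C = res A (res B C)"
  unfolding res_def setmul_def by (auto simp: times_assoc)

lemma res_exchange: "res A (res B C) = res B (res A C)"
proof -
  have "setmul A B = setmul B A" unfolding setmul_def by (auto intro: times_comm)
  then show ?thesis by (metis res_setmul)
qed

lemma imp_set_eq_res:
  assumes X: "up X" and Y: "up Y"
  shows "{z. \<forall>a. a \<notin> Y \<longrightarrow> imp z a \<notin> X} = res X Y"
proof (intro set_eqI iffI)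
  fix z assume z: "z \<in> {z. \<forall>a. a \<notin> Y \<longrightarrow> imp z a \<notin> X}"
  show "z \<in> res X Y" unfolding res_def
  proof (intro CollectI ballI, rule ccontr)
    fix x assume "x \<in> X" "z \<odot> x \<notin> Y"
    moreover have "imp z (z \<odot> x) \<in> X" using up_mem[OF X \<open>x \<in> X\<close> le_times_imp] .
    ultimately show False using z by blast
  qed
next
  fix z assume z: "z \<in> res X Y"
  show "z \<in> {z. \<forall>a. a \<notin> Y \<longrightarrow> imp z a \<notin> X}"
  proof (intro CollectI allI impI notI)
    fix a assume "a \<notin> Y" "imp z a \<in> X"
    then have "z \<odot> imp z a \<in> Y" using z unfolding res_def by blast
    then show False using up_mem[OF Y _ times_imp_le] \<open>a \<notin> Y\<close> by blast
  qed
qed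

lemma kernel_eq_res: "up X \<Longrightarrow> kernel oplus neg X = res X X"
  using imp_set_eq_res[of X X] unfolding kernel_def by simp

lemma farr_eq_res: "up X \<Longrightarrow> up Y \<Longrightarrow> arr X Y = res (X \<inter> Y) Y"
  using imp_set_eq_res[OF up_inter, of X Y] unfolding farr_def sub_at_def by auto

lemma fplus_eq: "fpos F = {z. neg z \<notin> F}"
  unfolding fplus_def sub_at_def imp_eq by simp

lemma fplus_up: "up F \<Longrightarrow> up (fpos F)"
  unfolding fplus_eq up_closed_def using neg_anti by blast

definition near :: "'a set \<Rightarrow> 'a set \<Rightarrow> bool" where
  "near X Y \<longleftrightarrow> res X Y \<subseteq> {one}"

lemma near_anti: "X' \<subseteq> X \<Longrightarrow> near X' Y \<Longrightarrow> near X Y"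
  unfolding near_def using res_anti by blast

lemma near_mono: "Y \<subseteq> Y' \<Longrightarrow> near X Y' \<Longrightarrow> near X Y"
  unfolding near_def using res_mono by blast

lemma fequiv_iff_near_sub:
  assumes X: "up X" and Y: "up Y" and XY: "X \<subseteq> Y"
  shows "feq X Y \<longleftrightarrow> near X Y"
proof -
  have "arr X Y = res X Y" "arr Y X = res X X"
    using farr_eq_res[OF X Y] farr_eq_res[OF Y X] XY by (simp_all add: Int_absorb2 Int_absorb1)
  moreover have "res X X \<subseteq> res X Y" using res_mono XY .
  moreover have "one \<in> res X X" using one_in_res by simp
  ultimately show ?thesis unfolding fequiv_def near_def mv_one_def by blast
qed

lemma fequiv_sym: "feq X Y \<longleftrightarrow> feq Y X"
  unfolding fequiv_def by blast

text \<open>Since up-closed sets form a chain, in general \<open>X \<equiv> Y\<close> says that the smaller of the two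
  is near the larger one.\<close>

lemma fequiv_iff_near:
  assumes X: "up X" and Y: "up Y"
  shows "feq X Y \<longleftrightarrow> near (X \<inter> Y) (X \<union> Y)"
proof (cases "X \<subseteq> Y")
  case True
  then show ?thesis using fequiv_iff_near_sub[OF X Y] by (simp add: Int_absorb2 Un_absorb1)
next
  case False
  then have "Y \<subseteq> X" using up_chain[OF X Y] by blast
  then show ?thesis using fequiv_iff_near_sub[OF Y X] fequiv_sym
    by (simp add: Int_absorb1 Un_absorb2)
qed

lemma fequiv_cong_from_nested:
  assumes up: "\<And>X. P X \<Longrightarrow> up X"
    and nested: "\<And>X Y. P X \<Longrightarrow> P Y \<Longrightarrow> X \<subseteq> Y \<Longrightarrow> near X Y \<Longrightarrow>
                   feq (h X) (h Y)"
    and "P X" "P Y" and XY: "feq X Y"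
  shows "feq (h X) (h Y)"
proof (cases "X \<subseteq> Y")
  case True
  then show ?thesis using nested \<open>P X\<close> \<open>P Y\<close> XY fequiv_iff_near_sub up by blast
next
  case False
  then have "Y \<subseteq> X" using up_chain up \<open>P X\<close> \<open>P Y\<close> by blast
  then show ?thesis using nested \<open>P X\<close> \<open>P Y\<close> XY fequiv_iff_near_sub up fequiv_sym by metis
qed

lemma res_fplus_le:
  assumes A: "up A"
  shows "res (fpos B) (fpos A) \<subseteq> res A B"
proof
  fix z assume z: "z \<in> res (fpos B) (fpos A)"
  show "z \<in> res A B" unfolding res_def
  proof (intro CollectI ballI, rule ccontr)
    fix a assume "a \<in> A" "z \<odot> a \<notin> B"
    then have "neg (z \<odot> a) \<in> fpos B" unfolding fplus_eq by simp
    then have "neg (z \<odot> neg (z \<odot> a)) \<notin> A" using z unfolding res_def fplus_eq by blast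
    moreover have "neg (z \<odot> neg (z \<odot> a)) = imp z (z \<odot> a)"
      using neg_times[of z "neg (z \<odot> a)"] by (simp only: neg_neg)
    ultimately show False using up_mem[OF A \<open>a \<in> A\<close> le_times_imp] by simp
  qed
qed

lemma fplus_nested:
  assumes A: "up A" and B: "up B" and AB: "A \<subseteq> B" and near: "near A B"
  shows "feq (fpos A) (fpos B)"
proof -
  have "fpos B \<subseteq> fpos A" using AB unfolding fplus_eq by blast
  moreover have "near (fpos B) (fpos A)"
    using res_fplus_le[OF A] near unfolding near_def by blast
  ultimately show ?thesis using fequiv_iff_near_sub fplus_up A B fequiv_sym by metis
qed

definition kfilter :: "'a set \<Rightarrow> bool" where
  "kfilter F \<longleftrightarrow> up F \<and> near F F"

lemma mv_filter_kfilter: "is_filter F \<Longrightarrow> kfilter F"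
  unfolding mv_filter_def kfilter_def near_def using kernel_eq_res by (auto simp: mv_one_def)

lemma kfilter_up: "kfilter F \<Longrightarrow> up F"
  unfolding kfilter_def by blast

lemma res_self_kfilter: "kfilter F \<Longrightarrow> res F F = {one}"
  unfolding kfilter_def near_def using one_in_res by blast

lemma kfilter_inter: "kfilter F \<Longrightarrow> kfilter G \<Longrightarrow> kfilter (F \<inter> G)"
  using up_chain[OF kfilter_up kfilter_up, of F G] by (auto simp: Int_absorb1 Int_absorb2)

lemma farr_up: "kfilter F \<Longrightarrow> kfilter G \<Longrightarrow> up (arr F G)"
  using farr_eq_res res_up kfilter_up by metis

text \<open>The splitting step behind transitivity of nearness: if \<open>z\<close> multiplies \<open>X\<close> into \<open>Z\<close>
  and \<open>z \<preceq> u \<odot> u\<close>, then \<open>u\<close> multiplies \<open>X\<close> into \<open>Y\<close> or \<open>Y\<close> into \<open>Z\<close>.\<close>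

lemma res_split:
  assumes Y: "up Y" and Z: "up Z" and z: "z \<in> res X Z" and zu: "z \<preceq> u \<odot> u"
  shows "u \<in> res X Y \<or> u \<in> res Y Z"
proof (rule disjCI)
  assume "u \<notin> res Y Z"
  then obtain y where y: "y \<in> Y" "u \<odot> y \<notin> Z" unfolding res_def by blast
  show "u \<in> res X Y" unfolding res_def
  proof (intro CollectI ballI, rule ccontr)
    fix x assume x: "x \<in> X" "u \<odot> x \<notin> Y"
    have "z \<odot> x \<preceq> u \<odot> u \<odot> x" using times_mono[OF zu] .
    also have "u \<odot> u \<odot> x = u \<odot> (u \<odot> x)" by (rule times_assoc)
    also have "u \<odot> (u \<odot> x) \<preceq> u \<odot> y" using times_mono2[OF up_outside_below[OF Y y(1) x(2)]] .
    finally have "z \<odot> x \<preceq> u \<odot> y" .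
    moreover have "z \<odot> x \<in> Z" using z x(1) unfolding res_def by blast
    ultimately show False using up_mem[OF Z] y(2) by blast
  qed
qed

end

locale dense_mv_chain = mv_chain +
  assumes non_discrete: "non_discrete oplus neg zero"
begin

text \<open>Every element below \<open>1\<close> lies below a square \<open>u \<odot> u\<close> with \<open>u\<close> below \<open>1\<close>: take \<open>v\<close>
  strictly between \<open>z\<close> and \<open>1\<close>, so that \<open>z = v \<odot> (v \<rightarrow> z)\<close> with both factors below \<open>1\<close>,
  and let \<open>u\<close> be the larger factor.\<close>

lemma below_square:
  assumes z: "z \<noteq> one"
  shows "\<exists>u. u \<noteq> one \<and> z \<preceq> u \<odot> u"
proof -
  have "mv_less oplus neg zero z one" using z unfolding mv_less_def by simp
  then obtain v where "mv_less oplus neg zero z v" "mv_less oplus neg zero v one"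
    using non_discrete unfolding non_discrete_def by blast
  then have zv: "z \<preceq> v" "z \<noteq> v" and v: "v \<noteq> one" unfolding mv_less_def by auto
  define v' where "v' = imp v z"
  have v': "v' \<noteq> one" using zv le_antisym imp_eq_one_iff unfolding v'_def by blast
  have z_le: "z \<preceq> v \<odot> v'" using le_times_imp_of_le[OF zv(1)] unfolding v'_def .
  show ?thesis
  proof (cases "v' \<preceq> v")
    case True
    have "z \<preceq> v \<odot> v" using z_le times_mono2[OF True] by (rule le_trans)
    then show ?thesis using v by blast
  next
    case False
    then have "v \<preceq> v'" using linear by blast
    have "z \<preceq> v' \<odot> v'" using z_le times_mono[OF \<open>v \<preceq> v'\<close>] by (rule le_trans)
    then show ?thesis using v' by blast
  qed
qed

lemma near_trans:
  assumes Y: "up Y" and Z: "up Z" and XY: "near X Y" and YZ: "near Y Z"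
  shows "near X Z"
  unfolding near_def
proof
  fix z assume z: "z \<in> res X Z"
  show "z \<in> {one}"
  proof (rule ccontr)
    assume "z \<notin> {one}"
    then obtain u where "u \<noteq> one" "z \<preceq> u \<odot> u" using below_square by blast
    then show False using res_split[OF Y Z z] XY YZ unfolding near_def by blast
  qed
qed

text \<open>Transitivity of \<open>\<equiv>\<close>: both hypotheses reach the middle set \<open>Y\<close>, so the least of the
  three sets is near the largest.\<close>

lemma fequiv_trans:
  assumes X: "up X" and Y: "up Y" and Z: "up Z"
    and XY: "feq X Y" and YZ: "feq Y Z"
  shows "feq X Z"
proof -
  let ?m = "X \<inter> Y \<inter> Z" and ?M = "X \<union> Y \<union> Z"
  have nXY: "near (X \<inter> Y) (X \<union> Y)" and nYZ: "near (Y \<inter> Z) (Y \<union> Z)"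
    using XY YZ fequiv_iff_near X Y Z by blast+
  have m: "?m = X \<inter> Y \<or> ?m = Y \<inter> Z" and M: "?M = X \<union> Y \<or> ?M = Y \<union> Z"
    using up_chain X Z by blast+
  have "near ?m Y" using m nXY nYZ near_mono[OF Un_upper2] near_mono[OF Un_upper1] by metis
  moreover have "near Y ?M"
    using M nXY nYZ near_anti[OF Int_lower2] near_anti[OF Int_lower1] by metis
  ultimately have "near ?m ?M" using near_trans[OF Y up_union[OF up_union[OF X Y] Z]] by blast
  then have "near (X \<inter> Z) ?M" by (rule near_anti[rotated]) blast
  then have "near (X \<inter> Z) (X \<union> Z)" by (rule near_mono[rotated]) blast
  then show ?thesis using fequiv_iff_near X Z by blast
qed

text \<open>If \<open>z\<close> is in its kernel, split \<open>z \<preceq> u \<odot> u\<close> with \<open>u < 1\<close>; as \<open>u\<close> is outside the kernels of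
  \<open>F\<close> and \<open>G\<close> there are \<open>f \<in> F\<close>, \<open>g \<in> G\<close> with \<open>u \<odot> f \<notin> F\<close>, \<open>u \<odot> g \<notin> G\<close>; the witness
  \<open>w = u \<odot> f \<rightarrow> g\<close> of the residual then forces \<open>u \<odot> g \<in> G\<close>.\<close>

lemma near_res_kfilter:
  assumes F: "kfilter F" and G: "kfilter G" and FG: "F \<subseteq> G"
  shows "near (res F G) (res F G)"
  unfolding near_def
proof
  fix z assume z: "z \<in> res (res F G) (res F G)"
  have Fu: "up F" and Gu: "up G" using F G kfilter_up by blast+
  show "z \<in> {one}"
  proof (rule ccontr)
    assume "z \<notin> {one}"
    then obtain u where u: "u \<noteq> one" "z \<preceq> u \<odot> u" using below_square by blast
    have "u \<notin> res F F" "u \<notin> res G G" using u res_self_kfilter F G by auto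
    then obtain f g where fg: "f \<in> F" "u \<odot> f \<notin> F" "g \<in> G" "u \<odot> g \<notin> G"
      unfolding res_def by blast
    define w where "w = imp (u \<odot> f) g"
    have w: "w \<in> res F G" unfolding res_def
    proof (intro CollectI ballI)
      fix f' assume f': "f' \<in> F"
      show "w \<odot> f' \<in> G"
      proof (cases "u \<odot> f \<preceq> g")
        case True
        then have "w = one" using imp_eq_one_iff unfolding w_def by blast
        then show ?thesis using f' FG by auto
      next
        case False
        then have "g \<preceq> u \<odot> f \<odot> w" using linear le_times_imp_of_le unfolding w_def by blast
        also have "u \<odot> f \<odot> w \<preceq> f' \<odot> w" using times_mono[OF up_outside_below[OF Fu f' fg(2)]] .
        also have "f' \<odot> w = w \<odot> f'" by (rule times_comm)
        finally show ?thesis using up_mem[OF Gu fg(3)] by blast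
      qed
    qed
    then have zwf: "z \<odot> w \<odot> f \<in> G" using z fg(1) unfolding res_def by blast
    have "z \<odot> w \<odot> f \<preceq> u \<odot> u \<odot> w \<odot> f" using times_mono[OF times_mono[OF u(2)]] .
    also have "u \<odot> u \<odot> w \<odot> f = u \<odot> (u \<odot> f \<odot> w)" by (simp add: times_ac)
    also have "u \<odot> (u \<odot> f \<odot> w) \<preceq> u \<odot> g" using times_mono2[OF times_imp_le] unfolding w_def .
    finally show False using up_mem[OF Gu zwf] fg(4) by blast
  qed
qed

text \<open>Shrinking the first argument of a residual into a filter by a near set changes the
  residual only by a near set.  By the exchange law this is transitivity of nearness
  through \<open>B\<close>.\<close>

lemma near_res_left:
  assumes B: "kfilter B" and G: "kfilter G" and BG: "B \<subseteq> G" and AB: "near A B"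
  shows "near (res B G) (res A G)"
proof -
  have "near B (res (res B G) G)"
    using near_res_kfilter[OF B G BG] unfolding near_def res_exchange[of B] .
  then have "near A (res (res B G) G)"
    using near_trans[OF kfilter_up[OF B] res_up[OF kfilter_up[OF G]] AB] by blast
  then show ?thesis unfolding near_def res_exchange[of "res B G"] .
qed

text \<open>Enlarging the second argument of a residual by a near set changes it only by a near
  set: residuating by the product \<open>res F G1 \<cdot> F\<close> reduces this to transitivity through \<open>G1\<close>.\<close>

lemma near_res_right:
  assumes F: "kfilter F" and G1: "kfilter G1" and G2: "up G2"
    and FG1: "F \<subseteq> G1" and G12: "near G1 G2"
  shows "near (res F G1) (res F G2)"
proof -
  let ?P = "setmul (res F G1) F"
  have "near ?P G1"
    using near_res_kfilter[OF F G1 FG1] unfolding near_def res_setmul .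
  then have "near ?P G2" using near_trans[OF kfilter_up[OF G1] G2 _ G12] by blast
  then show ?thesis unfolding near_def res_setmul .
qed

text \<open>Congruence of \<open>\<sqsubseteq>\<rightarrow>\<close> in its first argument, for nested near filters: with \<open>A\<^sub>i = F\<^sub>i \<inter> G\<close>
  we have \<open>F\<^sub>i \<sqsubseteq>\<rightarrow> G = res A\<^sub>i G\<close>, and \<open>A\<^sub>1 \<subseteq> A\<^sub>2\<close> are again near.\<close>

lemma farr_nested_left:
  assumes F1: "kfilter F1" and F2: "kfilter F2" and G: "kfilter G"
    and F12: "F1 \<subseteq> F2" and near12: "near F1 F2"
  shows "feq (arr F1 G) (arr F2 G)"
proof -
  have A_near: "near (F1 \<inter> G) (F2 \<inter> G)"
  proof (cases "F1 \<subseteq> G")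
    case True
    have "near F1 (F2 \<inter> G)" by (rule near_mono[OF Int_lower1 near12])
    moreover have "F1 \<inter> G = F1" using True by blast
    ultimately show ?thesis by (simp only:)
  next
    case False
    then have "G \<subseteq> F1" using up_chain[OF kfilter_up[OF F1] kfilter_up[OF G]] by blast
    then have "F1 \<inter> G = G" "F2 \<inter> G = G" using F12 by blast+
    moreover have "near G G" using G unfolding kfilter_def by blast
    ultimately show ?thesis by simp
  qed
  have near: "near (res (F2 \<inter> G) G) (res (F1 \<inter> G) G)"
    using near_res_left[OF kfilter_inter[OF F2 G] G Int_lower2 A_near] .
  have sub: "res (F2 \<inter> G) G \<subseteq> res (F1 \<inter> G) G" using F12 by (intro res_anti) blast
  have Gu: "up G" using kfilter_up[OF G] .
  have "feq (res (F2 \<inter> G) G) (res (F1 \<inter> G) G)"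
    using fequiv_iff_near_sub[OF res_up[OF Gu] res_up[OF Gu] sub] near by (rule iffD2)
  then show ?thesis
    unfolding farr_eq_res[OF kfilter_up[OF F1] Gu] farr_eq_res[OF kfilter_up[OF F2] Gu]
    by (rule fequiv_sym[THEN iffD1])
qed

text \<open>If \<open>G\<^sub>1 \<subseteq> F\<close> both sides are \<open>{1}\<close>; otherwise \<open>F \<subseteq> G\<^sub>1\<close> and \<open>near_res_right\<close> applies.\<close>

lemma farr_nested_right:
  assumes F: "kfilter F" and G1: "kfilter G1" and G2: "kfilter G2"
    and G12: "G1 \<subseteq> G2" and near12: "near G1 G2"
  shows "feq (arr F G1) (arr F G2)"
proof (cases "F \<subseteq> G1")
  case True
  have "F \<inter> G1 = F" "F \<inter> G2 = F" using True G12 by blast+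
  then have "arr F G1 = res F G1" "arr F G2 = res F G2"
    using farr_eq_res[OF kfilter_up[OF F]] kfilter_up[OF G1] kfilter_up[OF G2] by simp_all
  moreover have "res F G1 \<subseteq> res F G2" using res_mono G12 .
  moreover have "near (res F G1) (res F G2)"
    using near_res_right[OF F G1 kfilter_up[OF G2] True near12] .
  ultimately show ?thesis
    using fequiv_iff_near_sub[OF res_up[OF kfilter_up[OF G1]] res_up[OF kfilter_up[OF G2]]] by simp
next
  case False
  then have G1F: "G1 \<subseteq> F" using up_chain[OF kfilter_up[OF F] kfilter_up[OF G1]] by blast
  have "F \<inter> G1 = G1" using G1F by blast
  then have "arr F G1 = {one}"
    using farr_eq_res[OF kfilter_up[OF F] kfilter_up[OF G1]] res_self_kfilter[OF G1] by simp
  moreover have "arr F G2 = {one}"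
  proof -
    have "res (F \<inter> G2) G2 \<subseteq> res G1 G2" using G1F G12 by (intro res_anti) blast
    moreover have "one \<in> res (F \<inter> G2) G2" using one_in_res by blast
    ultimately show ?thesis
      using near12 farr_eq_res[OF kfilter_up[OF F] kfilter_up[OF G2]] unfolding near_def by blast
  qed
  moreover have "feq {one} {one}"
    using fequiv_iff_near_sub[OF up_one up_one] res_one unfolding near_def by blast
  ultimately show ?thesis by simp
qed

abbreviation filter_rel :: "('a set \<times> 'a set) set" where
  "filter_rel \<equiv> {(F, G). is_filter F \<and> is_filter G \<and> feq F G}"

lemma fequiv_equivalence: "equiv {F. is_filter F} filter_rel"
proof (rule equivI)
  show "filter_rel \<subseteq> {F. is_filter F} \<times> {F. is_filter F}" by blast
  show "refl_on {F. is_filter F} filter_rel"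
  proof (rule refl_onI)
    fix F assume "F \<in> {F. is_filter F}"
    then have F: "is_filter F" and "kfilter F" using mv_filter_kfilter by auto
    then have "feq F F" using fequiv_iff_near_sub unfolding kfilter_def by blast
    then show "(F, F) \<in> filter_rel" using F by simp
  qed
  show "sym filter_rel"
    by (rule symI) (simp add: fequiv_sym)
  show "trans filter_rel"
  proof (rule transI, clarsimp)
    fix X Y Z
    assume "is_filter X" "is_filter Y" "is_filter Z" "feq X Y" "feq Y Z"
    then show "feq X Z"
      using fequiv_trans[OF kfilter_up kfilter_up kfilter_up] mv_filter_kfilter by blast
  qed
qed

lemma fequiv_congruence:
  assumes "kfilter F1" "kfilter F2" "kfilter G1" "kfilter G2"
    and F: "feq F1 F2" and G: "feq G1 G2"
  shows "feq (fpos F1) (fpos F2)"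
    and "feq (arr F1 G1) (arr F2 G2)"
proof -
  show "feq (fpos F1) (fpos F2)"
    by (rule fequiv_cong_from_nested[of kfilter, OF kfilter_up fplus_nested])
      (simp_all add: kfilter_up assms)
  have "feq (arr F1 G1) (arr F2 G1)"
    by (rule fequiv_cong_from_nested[of kfilter, OF kfilter_up farr_nested_left])
      (simp_all add: assms)
  moreover have "feq (arr F2 G1) (arr F2 G2)"
    by (rule fequiv_cong_from_nested[of kfilter, OF kfilter_up farr_nested_right])
      (simp_all add: assms)
  ultimately show "feq (arr F1 G1) (arr F2 G2)"
    using fequiv_trans[OF farr_up farr_up farr_up] assms by blast
qed

end

theorem mainTheorem17:
  fixes oplus :: "'a \<Rightarrow> 'a \<Rightarrow> 'a" and neg :: "'a \<Rightarrow> 'a" and zero :: 'a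
  assumes "linear_mv oplus neg zero"
    and "non_discrete oplus neg zero"
  shows "equiv {F. mv_filter oplus neg zero F}
           {(F, G). mv_filter oplus neg zero F \<and> mv_filter oplus neg zero G \<and>
                    fequiv oplus neg zero F G} \<and>
         (\<forall>F1 F2 G1 G2.
           mv_filter oplus neg zero F1 \<longrightarrow> mv_filter oplus neg zero F2 \<longrightarrow>
           mv_filter oplus neg zero G1 \<longrightarrow> mv_filter oplus neg zero G2 \<longrightarrow>
           fequiv oplus neg zero F1 F2 \<longrightarrow> fequiv oplus neg zero G1 G2 \<longrightarrow>
           fequiv oplus neg zero (fplus oplus neg zero F1) (fplus oplus neg zero F2) \<and>
           fequiv oplus neg zero (farr oplus neg F1 G1) (farr oplus neg F2 G2))"
proof -
  interpret dense_mv_chain oplus neg zero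
    using assms by unfold_locales
  show ?thesis
    using fequiv_equivalence fequiv_congruence[OF mv_filter_kfilter mv_filter_kfilter
        mv_filter_kfilter mv_filter_kfilter] by simp
qed

end
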